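(* Let $t(z),d(z)\in\mathbb{C}[[z]]$ with $t^2-4d$ having a simple zero at $z=0$. Let $L_u$ be a free rank-2 module over $\mathbb{C}((z))[[\lambda]]$ with a $\lambda$-connection $\nabla:L_u\to L_u\,dz$ whose reduction $\nabla_0$ on $L_u/\lambda L_u$ satisfies $\operatorname{tr}\nabla_0=t\,dz$, $\det\nabla_0=d\,(dz)^2$, and let $L_0\subset L_u/\lambda L_u$ be a $\mathbb{C}[[z]]$-lattice with $\nabla_0(L_0)\subset L_0\,dz$. Then there exists at most one $\mathbb{C}[[z,\lambda]]$-lattice $L\subset L_u$ such that the image of $L$ in $L_u/\lambda L_u$ is $L_0$ (i.e. $L/\lambda L=L_0$) and $\nabla(L)\subset L\,dz$.
   Context: A $\lambda$-connection on a $\mathbb{C}((z))[[\lambda]]$-module $M$ is a $\mathbb{C}[[\lambda]]$-linear map $\nabla:M\to M\,dz$ with $\nabla(fs)=f\nabla(s)+\lambda s\,df$; its reduction $\nabla_0$ is the induced $\mathbb{C}((z))$-linear map on $M/\lambda M$. A $\mathbb{C}[[z,\lambda]]$-lattice in $L_u$ is a free rank-2 $\mathbb{C}[[z,\lambda]]$-submodule $L$ with $L\otimes_{\mathbb{C}[[z]]}\mathbb{C}((z))=L_u$. *)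

theory Defs
  imports "HOL-Computational_Algebra.Formal_Laurent_Series"
begin

text \<open>C((z))[[lambda]]: formal power series in lambda with Laurent-series coefficients in z.\<close>
type_synonym lser = "complex fls fps"

text \<open>L_u, a free rank-2 module over C((z))[[lambda]], written in a fixed basis.\<close>
type_synonym vecu = "lser \<times> lser"

text \<open>L_u / lambda L_u = C((z))^2.\<close>
type_synonym vec0 = "complex fls \<times> complex fls"

definition vadd :: "vecu \<Rightarrow> vecu \<Rightarrow> vecu" where
  "vadd u v = (fst u + fst v, snd u + snd v)"

definition smul :: "lser \<Rightarrow> vecu \<Rightarrow> vecu" where
  "smul f v = (f * fst v, f * snd v)"

definition dz :: "lser \<Rightarrow> lser" where
  "dz f = Abs_fps (\<lambda>n. fls_deriv (fps_nth f n))"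

definition lam_const :: "complex fps \<Rightarrow> lser" where
  "lam_const c = Abs_fps (\<lambda>n. fls_const (fps_nth c n))"

text \<open>lambda-connection (identifying L_u dz with L_u):
  C[[lambda]]-linear and nabla(f s) = f nabla(s) + lambda s df.\<close>
definition lambda_connection :: "(vecu \<Rightarrow> vecu) \<Rightarrow> bool" where
  "lambda_connection N \<longleftrightarrow>
     (\<forall>u v. N (vadd u v) = vadd (N u) (N v)) \<and>
     (\<forall>c v. N (smul (lam_const c) v) = smul (lam_const c) (N v)) \<and>
     (\<forall>f v. N (smul f v) = vadd (smul f (N v)) (smul (fps_X * dz f) v))"

definition red :: "vecu \<Rightarrow> vec0" where
  "red v = (fps_nth (fst v) 0, fps_nth (snd v) 0)"

definition lift0 :: "vec0 \<Rightarrow> vecu" where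
  "lift0 w = (fps_const (fst w), fps_const (snd w))"

definition nabla0 :: "(vecu \<Rightarrow> vecu) \<Rightarrow> vec0 \<Rightarrow> vec0" where
  "nabla0 N w = red (N (lift0 w))"

definition det2 :: "'a::comm_ring_1 \<times> 'a \<Rightarrow> 'a \<times> 'a \<Rightarrow> 'a" where
  "det2 v w = fst v * snd w - fst w * snd v"

definition tr0 :: "(vecu \<Rightarrow> vecu) \<Rightarrow> complex fls" where
  "tr0 N = fst (nabla0 N (1, 0)) + snd (nabla0 N (0, 1))"

definition det0 :: "(vecu \<Rightarrow> vecu) \<Rightarrow> complex fls" where
  "det0 N = det2 (nabla0 N (1, 0)) (nabla0 N (0, 1))"

text \<open>C[[z]]-lattice in C((z))^2: C[[z]]-span of a C((z))-basis.\<close>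
definition lattice0 :: "vec0 set \<Rightarrow> bool" where
  "lattice0 L0 \<longleftrightarrow> (\<exists>v1 v2. det2 v1 v2 \<noteq> 0 \<and>
     L0 = {(fps_to_fls a * fst v1 + fps_to_fls b * fst v2,
            fps_to_fls a * snd v1 + fps_to_fls b * snd v2) | a b. True})"

text \<open>C[[z,lambda]] as a subring of C((z))[[lambda]].\<close>
definition zlser :: "lser set" where
  "zlser = {r. \<forall>n m. m < 0 \<longrightarrow> fls_nth (fps_nth r n) m = 0}"

text \<open>C[[z,lambda]]-lattice in L_u: C[[z,lambda]]-span of a C((z))[[lambda]]-basis of L_u.\<close>
definition latticeU :: "vecu set \<Rightarrow> bool" where
  "latticeU L \<longleftrightarrow> (\<exists>w1 w2. fps_nth (det2 w1 w2) 0 \<noteq> 0 \<and>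
     L = {vadd (smul a w1) (smul b w2) | a b. a \<in> zlser \<and> b \<in> zlser})"

end

theory Submission
  imports Defs
begin

text \<open>Write \<open>L\<^sub>1\<close> and \<open>L\<^sub>2\<close> as row spans over \<open>\<complex>[[z,\<lambda>]]\<close> of matrices \<open>W\<close> and \<open>Z = U W\<close>;
  then \<open>L\<^sub>2 \<subseteq> L\<^sub>1\<close> as soon as \<open>U\<close> has entries in \<open>\<complex>[[z,\<lambda>]]\<close>. Invariance under \<open>\<nabla>\<close> gives
  connection matrices \<open>M\<close>, \<open>G\<close> with entries in \<open>\<complex>[[z,\<lambda>]]\<close> and \<open>\<lambda> U' + U M = G U\<close>, and
  equality of the reductions makes \<open>U\<^sub>0\<close> regular (entries in \<open>\<complex>[[z]]\<close>) with regular inverse.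

  The coefficients \<open>U\<^sub>n\<close> are shown regular by induction on \<open>n\<close>. Gauging by the truncation of
  \<open>U\<close> below \<open>\<lambda>\<^sup>n\<close> reduces to \<open>U = 1 + \<lambda>\<^sup>n X\<close>, and then the coefficients of \<open>\<lambda>\<^sup>0\<close> and
  \<open>\<lambda>\<^sup>1\<close> of the gauge equation say that \<open>[X\<^sub>0, M\<^sub>0]\<close> and
  \<open>X\<^sub>0' + [X\<^sub>1, M\<^sub>0] + [X\<^sub>0, M\<^sub>1]\<close> (corrected by \<open>[X\<^sub>0, M\<^sub>0] X\<^sub>0\<close> if \<open>n = 1\<close>) are regular.
  Because the discriminant \<open>d\<close> of \<open>M\<^sub>0\<close> has a simple zero, \<open>M\<^sub>0\<close> is not scalar modulo \<open>z\<close>,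
  so \<open>X\<^sub>0 = \<alpha> + \<beta> N + (regular)\<close> with \<open>N\<close> the traceless part of \<open>2 M\<^sub>0\<close>. Taking traces
  shows that \<open>\<alpha>'\<close> and \<open>2 \<beta>' d + \<beta> d'\<close> are regular, and the simple zero of \<open>d\<close> forces
  \<open>\<alpha>\<close> and \<open>\<beta>\<close> to be regular.\<close>

unbundle fps_syntax

section \<open>2 by 2 matrices over a commutative ring\<close>

datatype 'a mat2 = Mat2 (e11: 'a) (e12: 'a) (e21: 'a) (e22: 'a)

declare mat2.map_sel [simp]

lemma mat2_eqI: "e11 A = e11 B \<Longrightarrow> e12 A = e12 B \<Longrightarrow> e21 A = e21 B \<Longrightarrow> e22 A = e22 B \<Longrightarrow> A = B"
  by (cases A; cases B) simp

lemma pred_mat2_sel: "pred_mat2 P A \<longleftrightarrow> P (e11 A) \<and> P (e12 A) \<and> P (e21 A) \<and> P (e22 A)"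
  by (cases A) simp

instantiation mat2 :: (comm_ring_1) ring_1
begin
definition "0 = Mat2 0 0 0 0"
definition "1 = Mat2 1 0 0 1"
definition "A + B = Mat2 (e11 A + e11 B) (e12 A + e12 B) (e21 A + e21 B) (e22 A + e22 B)"
definition "A - B = Mat2 (e11 A - e11 B) (e12 A - e12 B) (e21 A - e21 B) (e22 A - e22 B)"
definition "- A = Mat2 (- e11 A) (- e12 A) (- e21 A) (- e22 A)"
definition "A * B = Mat2 (e11 A * e11 B + e12 A * e21 B) (e11 A * e12 B + e12 A * e22 B)
   (e21 A * e11 B + e22 A * e21 B) (e21 A * e12 B + e22 A * e22 B)"
instance
  by standard (auto simp: zero_mat2_def one_mat2_def plus_mat2_def minus_mat2_def
      uminus_mat2_def times_mat2_def algebra_simps intro: mat2.expand)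
end

lemma mat2_ring_sel [simp]:
  "e11 (A + B) = e11 A + e11 B" "e12 (A + B) = e12 A + e12 B"
  "e21 (A + B) = e21 A + e21 B" "e22 (A + B) = e22 A + e22 B"
  "e11 (A - B) = e11 A - e11 B" "e12 (A - B) = e12 A - e12 B"
  "e21 (A - B) = e21 A - e21 B" "e22 (A - B) = e22 A - e22 B"
  "e11 (- A) = - e11 A" "e12 (- A) = - e12 A" "e21 (- A) = - e21 A" "e22 (- A) = - e22 A"
  "e11 (A * B) = e11 A * e11 B + e12 A * e21 B" "e12 (A * B) = e11 A * e12 B + e12 A * e22 B"
  "e21 (A * B) = e21 A * e11 B + e22 A * e21 B" "e22 (A * B) = e21 A * e12 B + e22 A * e22 B"
  "e11 (0::'a::comm_ring_1 mat2) = 0" "e12 (0::'a::comm_ring_1 mat2) = 0"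
  "e21 (0::'a::comm_ring_1 mat2) = 0" "e22 (0::'a::comm_ring_1 mat2) = 0"
  "e11 (1::'a::comm_ring_1 mat2) = 1" "e12 (1::'a::comm_ring_1 mat2) = 0"
  "e21 (1::'a::comm_ring_1 mat2) = 0" "e22 (1::'a::comm_ring_1 mat2) = 1"
  by (simp_all add: zero_mat2_def one_mat2_def plus_mat2_def minus_mat2_def uminus_mat2_def
      times_mat2_def)

definition mat2_scalar :: "'a::comm_ring_1 \<Rightarrow> 'a mat2" where
  "mat2_scalar c = Mat2 c 0 0 c"

definition mat2_tr :: "'a::comm_ring_1 mat2 \<Rightarrow> 'a" where
  "mat2_tr A = e11 A + e22 A"

definition mat2_det :: "'a::comm_ring_1 mat2 \<Rightarrow> 'a" where
  "mat2_det A = e11 A * e22 A - e12 A * e21 A"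

definition mat2_disc :: "'a::comm_ring_1 mat2 \<Rightarrow> 'a" where
  "mat2_disc A = mat2_tr A ^ 2 - 4 * mat2_det A"

definition mat2_adj :: "'a::comm_ring_1 mat2 \<Rightarrow> 'a mat2" where
  "mat2_adj A = Mat2 (e22 A) (- e12 A) (- e21 A) (e11 A)"

lemma mat2_scalar_sel [simp]:
  "e11 (mat2_scalar c) = c" "e12 (mat2_scalar c) = 0" "e21 (mat2_scalar c) = 0" "e22 (mat2_scalar c) = c"
  by (simp_all add: mat2_scalar_def)

lemma mat2_scalar_0 [simp]: "mat2_scalar 0 = (0::'a::comm_ring_1 mat2)"
  and mat2_scalar_1 [simp]: "mat2_scalar 1 = (1::'a::comm_ring_1 mat2)"
  by (auto intro: mat2_eqI)

lemma mat2_scalar_commute: "mat2_scalar c * A = A * mat2_scalar c"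
  by (auto intro: mat2_eqI simp: algebra_simps)

lemma mat2_scalar_mult: "mat2_scalar a * mat2_scalar b = mat2_scalar (a * b)"
  by (auto intro: mat2_eqI)

lemma mat2_det_mult: "mat2_det (A * B) = mat2_det A * mat2_det B"
  by (simp add: mat2_det_def algebra_simps)

lemma mat2_tr_commute: "mat2_tr (A * B) = mat2_tr (B * A)"
  by (simp add: mat2_tr_def algebra_simps)

lemma mat2_mult_adj: "A * mat2_adj A = mat2_scalar (mat2_det A)"
  by (auto intro: mat2_eqI simp: mat2_adj_def mat2_det_def algebra_simps)

lemma mat2_adj_mult: "mat2_adj A * A = mat2_scalar (mat2_det A)"
  by (auto intro: mat2_eqI simp: mat2_adj_def mat2_det_def algebra_simps)

lemma mat2_inverse_of_det:
  assumes "mat2_det A * c = 1"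
  shows "A * (mat2_adj A * mat2_scalar c) = 1" "mat2_adj A * mat2_scalar c * A = 1"
proof -
  show "A * (mat2_adj A * mat2_scalar c) = 1"
    by (simp add: mult.assoc[symmetric] mat2_mult_adj mat2_scalar_mult assms)
  have "mat2_adj A * mat2_scalar c * A = mat2_adj A * A * mat2_scalar c"
    by (simp add: mult.assoc mat2_scalar_commute)
  thus "mat2_adj A * mat2_scalar c * A = 1"
    by (simp add: mat2_adj_mult mat2_scalar_mult assms)
qed

lemma mat2_det_inverse: "A * B = 1 \<Longrightarrow> mat2_det A * mat2_det B = 1"
  using mat2_det_mult[of A B] by (simp add: mat2_det_def)

lemma mat2_inverse_commute:
  fixes A B :: "'a::comm_ring_1 mat2"
  assumes "A * B = 1"
  shows "B * A = 1"
proof -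
  define C where "C = mat2_adj A * mat2_scalar (mat2_det B)"
  have AC: "A * C = 1" and CA: "C * A = 1"
    unfolding C_def using mat2_inverse_of_det[OF mat2_det_inverse[OF assms]] by auto
  have "B = C * (A * B)" by (simp add: mult.assoc[symmetric] CA)
  also have "\<dots> = C" by (simp add: assms)
  finally show ?thesis by (simp add: CA)
qed

lemma mat2_disc_conj:
  assumes "Q * Qi = 1"
  shows "mat2_disc (Q * A * Qi) = mat2_disc A"
proof -
  have "mat2_tr (Q * A * Qi) = mat2_tr (Qi * (Q * A))"
    by (rule mat2_tr_commute)
  also have "\<dots> = mat2_tr A"
    by (simp only: mult.assoc[symmetric] mat2_inverse_commute[OF assms] mult_1_left)
  finally have "mat2_tr (Q * A * Qi) = mat2_tr A" .
  moreover have "mat2_det (Q * A * Qi) = mat2_det A * (mat2_det Q * mat2_det Qi)"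
    by (simp add: mat2_det_mult mult_ac)
  hence "mat2_det (Q * A * Qi) = mat2_det A"
    by (simp add: mat2_det_inverse[OF assms])
  ultimately show ?thesis by (simp add: mat2_disc_def)
qed

lemma mat2_mult_right_cancel:
  fixes A B Q Qi :: "'a::comm_ring_1 mat2"
  assumes "A * Q = B * Q" "Q * Qi = 1"
  shows "A = B"
  by (metis assms mult.assoc mult_1_right)

definition mat2_transpose :: "'a mat2 \<Rightarrow> 'a mat2" where
  "mat2_transpose A = Mat2 (e11 A) (e21 A) (e12 A) (e22 A)"

lemma mat2_transpose_sel [simp]:
  "e11 (mat2_transpose A) = e11 A" "e12 (mat2_transpose A) = e21 A"
  "e21 (mat2_transpose A) = e12 A" "e22 (mat2_transpose A) = e22 A"
  by (simp_all add: mat2_transpose_def)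

lemma mat2_transpose_transpose [simp]: "mat2_transpose (mat2_transpose A) = A"
  by (rule mat2_eqI) simp_all

lemma mat2_transpose_ring [simp]:
  fixes A B :: "'a::comm_ring_1 mat2"
  shows "mat2_transpose (A + B) = mat2_transpose A + mat2_transpose B"
    "mat2_transpose (A - B) = mat2_transpose A - mat2_transpose B"
    "mat2_transpose (A * B) = mat2_transpose B * mat2_transpose A"
    "mat2_transpose (mat2_scalar c) = mat2_scalar c"
  by (auto intro: mat2_eqI simp: algebra_simps)

definition row_mult :: "'a::comm_ring_1 \<times> 'a \<Rightarrow> 'a mat2 \<Rightarrow> 'a \<times> 'a" where
  "row_mult x B = (fst x * e11 B + snd x * e21 B, fst x * e12 B + snd x * e22 B)"

definition mat2_of_rows :: "'a \<times> 'a \<Rightarrow> 'a \<times> 'a \<Rightarrow> 'a mat2" where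
  "mat2_of_rows a b = Mat2 (fst a) (snd a) (fst b) (snd b)"

lemma mat2_of_rows_sel [simp]:
  "e11 (mat2_of_rows a b) = fst a" "e12 (mat2_of_rows a b) = snd a"
  "e21 (mat2_of_rows a b) = fst b" "e22 (mat2_of_rows a b) = snd b"
  by (simp_all add: mat2_of_rows_def)

lemma row_mult_mult: "row_mult x (A * B) = row_mult (row_mult x A) B"
  by (simp add: row_mult_def algebra_simps)

lemma row_mult_1 [simp]: "row_mult x 1 = x"
  by (simp add: row_mult_def)

lemma row_mult_unit_rows [simp]:
  "row_mult (1, 0) B = (e11 B, e12 B)" "row_mult (0, 1) B = (e21 B, e22 B)"
  by (simp_all add: row_mult_def)

lemma mat2_of_rows_row_mult: "mat2_of_rows (row_mult a B) (row_mult b B) = mat2_of_rows a b * B"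
  by (rule mat2_eqI) (simp_all add: row_mult_def)

lemma row_mult_cancel:
  assumes "row_mult a Q = row_mult b Q" "Q * Qi = 1"
  shows "a = b"
proof -
  have "a = row_mult (row_mult a Q) Qi" by (simp add: row_mult_mult[symmetric] assms(2))
  also have "\<dots> = b" by (simp add: assms(1) row_mult_mult[symmetric] assms(2))
  finally show ?thesis .
qed

section \<open>Regular Laurent series\<close>

definition fls_regular :: "'a::zero fls \<Rightarrow> bool" where
  "fls_regular x \<longleftrightarrow> (\<forall>m<0. x $$ m = 0)"

lemma fls_regular_iff_subdegree: "fls_regular x \<longleftrightarrow> 0 \<le> fls_subdegree x"
proof
  assume "fls_regular x"
  thus "0 \<le> fls_subdegree x"
    unfolding fls_regular_def by (metis fls_subdegree_geI fls_zero_subdegree order_refl)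
qed (simp add: fls_regular_def)

lemma fls_regular_0 [simp]: "fls_regular 0"
  and fls_regular_1 [simp]: "fls_regular (1::'a::{zero,one} fls)"
  and fls_regular_numeral [simp]: "fls_regular (numeral k :: 'b::{comm_semiring_1} fls)"
  and fls_regular_fps_to_fls [simp]: "fls_regular (fps_to_fls f)"
  by (simp_all add: fls_regular_def)

lemma fls_regular_add [simp]: "fls_regular x \<Longrightarrow> fls_regular y \<Longrightarrow> fls_regular (x + y)"
  by (simp add: fls_regular_def)

lemma fls_regular_diff [simp]: "fls_regular x \<Longrightarrow> fls_regular y \<Longrightarrow> fls_regular (x - y)"
  by (simp add: fls_regular_def)

lemma fls_regular_uminus [simp]: "fls_regular x \<Longrightarrow> fls_regular (- x)"
  by (simp add: fls_regular_def)

lemma fls_regular_add_cancel: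
  fixes x y :: "'a::group_add fls"
  shows "fls_regular (x + y) \<Longrightarrow> fls_regular y \<Longrightarrow> fls_regular x"
  using fls_regular_diff[of "x + y" y] by simp

lemma fls_regular_sum [simp]: "(\<And>i. i \<in> A \<Longrightarrow> fls_regular (f i)) \<Longrightarrow> fls_regular (sum f A)"
  by (induction A rule: infinite_finite_induct) (auto intro!: fls_regular_add)

lemma fls_regularE:
  assumes "fls_regular x"
  obtains a where "x = fps_to_fls a"
  using assms that[of "fls_regpart x"] by (simp add: fls_regular_iff_subdegree)

lemma fls_regular_mult [simp]:
  fixes x y :: "'a::comm_ring_1 fls"
  assumes "fls_regular x" "fls_regular y"
  shows "fls_regular (x * y)"
  using assms by (elim fls_regularE) (simp flip: fls_times_fps_to_fls)

lemma fls_regular_power [simp]: "fls_regular (x :: 'a::comm_ring_1 fls) \<Longrightarrow> fls_regular (x ^ n)"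
  by (induction n) simp_all

lemma fls_regular_numeral_mult_iff:
  "fls_regular (numeral k * x) \<longleftrightarrow> fls_regular (x :: 'a::field_char_0 fls)"
  unfolding fls_regular_def by simp

lemma fls_regular_deriv_iff:
  "fls_regular (fls_deriv x) \<longleftrightarrow> fls_regular (x :: 'a::field_char_0 fls)"
  unfolding fls_regular_def
proof (intro iffI allI impI)
  fix m :: int
  assume "\<forall>m<0. fls_deriv x $$ m = 0" and "m < 0"
  hence "fls_deriv x $$ (m - 1) = 0" by (simp del: fls_deriv_nth)
  hence "of_int m * x $$ m = 0" by simp
  thus "x $$ m = 0" using \<open>m < 0\<close> by simp
next
  fix m :: int
  assume h: "\<forall>m<0. x $$ m = 0" and "m < 0"
  show "fls_deriv x $$ m = 0"
  proof (cases "m = -1")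
    case False thus ?thesis using h \<open>m < 0\<close> by simp
  qed simp
qed

lemma fls_regular_inverse:
  fixes x :: "'a::field fls"
  assumes "fls_regular x" "x $$ 0 \<noteq> 0"
  shows "fls_regular (inverse x)"
proof -
  have "fls_subdegree x = 0"
    using assms by (metis antisym fls_subdegree_leI fls_regular_iff_subdegree)
  thus ?thesis by (simp add: fls_regular_iff_subdegree)
qed

lemma fls_regular_mult_nth:
  fixes x y :: "'a::comm_ring_1 fls"
  assumes "fls_regular x" "fls_regular y"
  shows "(x * y) $$ 0 = x $$ 0 * y $$ 0" "(x * y) $$ 1 = x $$ 0 * y $$ 1 + x $$ 1 * y $$ 0"
  using assms by (auto elim!: fls_regularE simp flip: fls_times_fps_to_fls simp: fps_mult_nth_1)

lemma fls_subdegree_simple_zero: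
  fixes d :: "'a::field_char_0 fls"
  assumes d: "fls_regular d" "d $$ 0 = 0" "d $$ 1 \<noteq> 0"
  shows "fls_subdegree d = 1" "fls_subdegree (fls_deriv d) = 0"
proof -
  have "d \<noteq> 0" using d(3) by auto
  show "fls_subdegree d = 1"
  proof (rule antisym)
    show "fls_subdegree d \<le> 1" using d(3) by (rule fls_subdegree_leI)
    show "1 \<le> fls_subdegree d"
    proof (rule fls_subdegree_geI[OF \<open>d \<noteq> 0\<close>])
      fix k :: int assume "k < 1"
      then consider "k < 0" | "k = 0" by linarith
      thus "d $$ k = 0" using d(1,2) by cases (auto simp: fls_regular_def)
    qed
  qed
  show "fls_subdegree (fls_deriv d) = 0"
  proof (rule antisym)
    show "fls_subdegree (fls_deriv d) \<le> 0" by (rule fls_subdegree_leI) (use d(3) in simp)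
    show "0 \<le> fls_subdegree (fls_deriv d)"
      using d(1) by (simp add: fls_regular_deriv_iff flip: fls_regular_iff_subdegree)
  qed
qed

text \<open>If \<open>\<beta>\<close> had a pole, with leading term \<open>\<beta>\<^sub>m z\<^sup>m\<close> (\<open>m < 0\<close>), the coefficient of \<open>z\<^sup>m\<close> in
  \<open>2 \<beta>' d + \<beta> d'\<close> would be \<open>(2 m + 1) \<beta>\<^sub>m d\<^sub>1 \<noteq> 0\<close>.\<close>

lemma fls_regular_of_simple_zero:
  fixes \<beta> d :: "'a::field_char_0 fls"
  assumes d: "fls_regular d" "d $$ 0 = 0" "d $$ 1 \<noteq> 0"
    and reg: "fls_regular (2 * fls_deriv \<beta> * d + \<beta> * fls_deriv d)"
  shows "fls_regular \<beta>"
proof (rule ccontr)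
  assume "\<not> fls_regular \<beta>"
  define m where "m = fls_subdegree \<beta>"
  have m: "m < 0" and \<beta>m: "\<beta> $$ m \<noteq> 0"
    using \<open>\<not> fls_regular \<beta>\<close>
    by (auto simp: fls_regular_iff_subdegree m_def nth_fls_subdegree_zero_iff)
  have sd: "fls_subdegree d = 1" and sd': "fls_subdegree (fls_deriv d) = 0"
    using fls_subdegree_simple_zero[OF d] by simp_all
  have "fls_subdegree (fls_deriv \<beta>) = m - 1"
    using m by (simp add: fls_subdegree_deriv m_def)
  hence "(fls_deriv \<beta> * d) $$ m = of_int m * \<beta> $$ m * d $$ 1"
    using fls_times_base[of "fls_deriv \<beta>" d] sd by simp
  moreover have "(\<beta> * fls_deriv d) $$ m = \<beta> $$ m * d $$ 1"
    using fls_times_base[of \<beta> "fls_deriv d"] sd' by (simp add: m_def)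
  moreover have "2 * (fls_deriv \<beta> * d) $$ m + (\<beta> * fls_deriv d) $$ m = 0"
    using reg m by (simp add: fls_regular_def mult.assoc)
  ultimately have "(2 * of_int m + 1) * \<beta> $$ m * d $$ 1 = 0"
    by (simp add: algebra_simps)
  moreover have "(2 * of_int m + 1 :: 'a) \<noteq> 0"
  proof
    assume "(2 * of_int m + 1 :: 'a) = 0"
    hence "of_int (2 * m + 1) = (0::'a)" by simp
    hence "2 * m + 1 = 0" by (simp only: of_int_eq_0_iff)
    thus False by presburger
  qed
  ultimately show False using \<beta>m d(3) by simp
qed

abbreviation regular_mat2 :: "'a::zero fls mat2 \<Rightarrow> bool" where
  "regular_mat2 \<equiv> pred_mat2 fls_regular"

abbreviation mat2_deriv :: "'a::ring_1 fls mat2 \<Rightarrow> 'a fls mat2" where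
  "mat2_deriv \<equiv> map_mat2 fls_deriv"

lemma regular_mat2_ring [simp]:
  fixes A B :: "'a::field_char_0 fls mat2"
  shows "regular_mat2 A \<Longrightarrow> regular_mat2 B \<Longrightarrow> regular_mat2 (A + B)"
    "regular_mat2 A \<Longrightarrow> regular_mat2 B \<Longrightarrow> regular_mat2 (A - B)"
    "regular_mat2 A \<Longrightarrow> regular_mat2 (- A)"
    "regular_mat2 A \<Longrightarrow> regular_mat2 B \<Longrightarrow> regular_mat2 (A * B)"
    "regular_mat2 A \<Longrightarrow> regular_mat2 (mat2_deriv A)"
    "regular_mat2 A \<Longrightarrow> regular_mat2 (mat2_transpose A)"
    "fls_regular c \<Longrightarrow> regular_mat2 (mat2_scalar c)"
    "regular_mat2 0" "regular_mat2 1"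
  by (auto simp: pred_mat2_sel fls_regular_deriv_iff)

lemma regular_mat2_tr: "regular_mat2 A \<Longrightarrow> fls_regular (mat2_tr A)"
  by (simp add: pred_mat2_sel mat2_tr_def)

lemma regular_mat2_det: "regular_mat2 (A :: 'a::comm_ring_1 fls mat2) \<Longrightarrow> fls_regular (mat2_det A)"
  by (simp add: pred_mat2_sel mat2_det_def)

text \<open>If both off-diagonal entries vanished at \<open>z = 0\<close>, the discriminant
  \<open>(P\<^sub>1\<^sub>1 - P\<^sub>2\<^sub>2)\<^sup>2 + 4 P\<^sub>1\<^sub>2 P\<^sub>2\<^sub>1\<close> would vanish to second order.\<close>

lemma offdiag_nonzero_of_simple_zero_disc:
  fixes P :: "'a::field_char_0 fls mat2"
  assumes P: "regular_mat2 P" and d: "mat2_disc P $$ 0 = 0" "mat2_disc P $$ 1 \<noteq> 0"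
  shows "e12 P $$ 0 \<noteq> 0 \<or> e21 P $$ 0 \<noteq> 0"
proof (rule ccontr)
  define u where "u = e11 P - e22 P"
  have reg: "fls_regular u" "fls_regular (e12 P)" "fls_regular (e21 P)"
    using P by (simp_all add: pred_mat2_sel u_def)
  have disc: "mat2_disc P = u * u + 4 * (e12 P * e21 P)"
    by (simp add: mat2_disc_def mat2_tr_def mat2_det_def u_def power2_eq_square algebra_simps)
  assume "\<not> (e12 P $$ 0 \<noteq> 0 \<or> e21 P $$ 0 \<noteq> 0)"
  hence "e12 P $$ 0 = 0" "e21 P $$ 0 = 0" by auto
  moreover have "u $$ 0 = 0"
    using d(1) \<open>e12 P $$ 0 = 0\<close> unfolding disc by (simp add: fls_regular_mult_nth reg)
  ultimately have "mat2_disc P $$ 1 = 0"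
    unfolding disc by (simp add: fls_regular_mult_nth reg)
  with d(2) show False by simp
qed

lemma regular_commutant_decomposition_upper:
  fixes X N :: "'a::field_char_0 fls mat2"
  assumes N: "N = Mat2 u v w (- u)" "regular_mat2 N" and v: "v $$ 0 \<noteq> 0"
    and comm: "regular_mat2 (X * N - N * X)"
  obtains \<alpha> \<beta> Z where "X = mat2_scalar \<alpha> + mat2_scalar \<beta> * N + Z" "regular_mat2 Z"
proof -
  have "v \<noteq> 0" using v by auto
  define iv where "iv = inverse v"
  have "fls_regular v" using N by simp
  hence iv: "fls_regular iv" "v * iv = 1"
    using fls_regular_inverse[OF _ v] \<open>v \<noteq> 0\<close> by (simp_all add: iv_def)
  have ivv: "iv * (v * y) = y" "v * (iv * y) = y" for y
    using iv(2) by (simp_all add: mult.left_commute[of iv])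
  define \<beta> where "\<beta> = e12 X * iv"
  define \<alpha> where "\<alpha> = e11 X - \<beta> * u"
  define Z where "Z = X - mat2_scalar \<alpha> - mat2_scalar \<beta> * N"
  have C: "fls_regular (e11 (X * N - N * X))" "fls_regular (e12 (X * N - N * X))"
    using comm unfolding pred_mat2_sel by blast+
  have "e11 Z = 0" "e12 Z = 0"
    using ivv(1)[of 1] by (simp_all add: Z_def N(1) \<alpha>_def \<beta>_def mult.assoc)
  moreover have "e21 Z = - e11 (X * N - N * X) * iv"
  proof -
    have "e21 Z = e21 X - e12 X * iv * w" by (simp add: Z_def N(1) \<beta>_def)
    also have "\<dots> = - e11 (X * N - N * X) * iv" using iv(2) by (simp add: N(1) algebra_simps)
    finally show ?thesis .
  qed
  moreover have "e22 Z = - e12 (X * N - N * X) * iv"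
  proof -
    have "e22 Z = e22 X - e11 X + 2 * e12 X * iv * u" by (simp add: Z_def N(1) \<alpha>_def \<beta>_def)
    also have "\<dots> = - e12 (X * N - N * X) * iv"
      by (simp add: N(1) algebra_simps ivv)
    finally show ?thesis .
  qed
  ultimately have "regular_mat2 Z"
    unfolding pred_mat2_sel using C iv(1) by (simp only: fls_regular_mult fls_regular_uminus fls_regular_0)
  moreover have "X = mat2_scalar \<alpha> + mat2_scalar \<beta> * N + Z" by (simp add: Z_def)
  ultimately show ?thesis using that by blast
qed

lemma regular_commutant_decomposition:
  fixes X N :: "'a::field_char_0 fls mat2"
  assumes N: "N = Mat2 u v w (- u)" "regular_mat2 N" and vw: "v $$ 0 \<noteq> 0 \<or> w $$ 0 \<noteq> 0"
    and comm: "regular_mat2 (X * N - N * X)"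
  obtains \<alpha> \<beta> Z where "X = mat2_scalar \<alpha> + mat2_scalar \<beta> * N + Z" "regular_mat2 Z"
  using vw
proof
  assume "v $$ 0 \<noteq> 0"
  from regular_commutant_decomposition_upper[OF N this comm] that show ?thesis by blast
next
  assume w: "w $$ 0 \<noteq> 0"
  let ?T = mat2_transpose
  have TN: "?T N = Mat2 u w v (- u)" "regular_mat2 (?T N)" using N by (simp_all add: mat2_transpose_def)
  have TC: "?T X * ?T N - ?T N * ?T X = - ?T (X * N - N * X)"
    by (rule mat2_eqI) simp_all
  have "regular_mat2 (?T X * ?T N - ?T N * ?T X)"
    unfolding TC by (intro regular_mat2_ring(3,6) comm)
  then obtain \<alpha> \<beta> Z where TX: "?T X = mat2_scalar \<alpha> + mat2_scalar \<beta> * ?T N + Z" and "regular_mat2 Z"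
    using regular_commutant_decomposition_upper[OF TN w] by blast
  have "X = ?T (?T X)" by simp
  also have "\<dots> = mat2_scalar \<alpha> + mat2_scalar \<beta> * N + ?T Z"
    unfolding TX by (simp add: mat2_scalar_commute)
  finally show ?thesis using that \<open>regular_mat2 Z\<close> by simp
qed

lemma mat2_tr_commutator_condition_eq:
  fixes P M1 X1 Z :: "'a::field_char_0 fls mat2"
  assumes N: "N = Mat2 (e11 P - e22 P) (2 * e12 P) (2 * e21 P) (e22 P - e11 P)"
    and X0: "X0 = mat2_scalar \<alpha> + mat2_scalar \<beta> * N + Z"
  shows "mat2_tr (mat2_scalar 2 * (mat2_deriv X0 + (X1 * P - P * X1) + (X0 * M1 - M1 * X0)
            - (if b then (X0 * P - P * X0) * X0 else 0)))
     = 4 * fls_deriv \<alpha> + (2 * mat2_tr (mat2_deriv Z) - (if b then mat2_tr ((Z * N - N * Z) * Z) else 0))"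
  using N X0 by (cases P; cases Z; cases X1; cases M1) (simp add: mat2_tr_def algebra_simps)

lemma mat2_tr_commutator_condition_mult_eq:
  fixes P M1 X1 Z :: "'a::field_char_0 fls mat2"
  assumes N: "N = Mat2 (e11 P - e22 P) (2 * e12 P) (2 * e21 P) (e22 P - e11 P)"
    and X0: "X0 = mat2_scalar \<alpha> + mat2_scalar \<beta> * N + Z"
    and d: "d = (e11 P - e22 P)^2 + (2 * e12 P) * (2 * e21 P)"
  shows "mat2_tr (mat2_scalar 2 * (mat2_deriv X0 + (X1 * P - P * X1) + (X0 * M1 - M1 * X0)
            - (if b then (X0 * P - P * X0) * X0 else 0)) * N)
     = 2 * (2 * fls_deriv \<beta> * d + \<beta> * fls_deriv d) + (2 * mat2_tr (mat2_deriv Z * N)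
         + 2 * mat2_tr (Z * (M1 * N - N * M1)) - (if b then mat2_tr ((Z * N - N * Z) * Z * N) else 0))"
  unfolding d using N X0
  by (cases P; cases Z; cases X1; cases M1) (simp add: mat2_tr_def algebra_simps power2_eq_square)

lemma commutant_coefficients_regular:
  fixes P M1 X1 Z :: "'a::field_char_0 fls mat2"
  assumes N: "N = Mat2 (e11 P - e22 P) (2 * e12 P) (2 * e21 P) (e22 P - e11 P)"
    and X0: "X0 = mat2_scalar \<alpha> + mat2_scalar \<beta> * N + Z"
    and P: "regular_mat2 P" and M1: "regular_mat2 M1" and Z: "regular_mat2 Z"
    and d: "mat2_disc P $$ 0 = 0" "mat2_disc P $$ 1 \<noteq> 0"
    and cond: "regular_mat2 (mat2_deriv X0 + (X1 * P - P * X1) + (X0 * M1 - M1 * X0)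
                 - (if b then (X0 * P - P * X0) * X0 else 0))"
  shows "fls_regular \<alpha>" "fls_regular \<beta>"
proof -
  have N_reg: "regular_mat2 N" using P by (simp add: N pred_mat2_sel fls_regular_numeral_mult_iff)
  have disc: "mat2_disc P = (e11 P - e22 P)^2 + (2 * e12 P) * (2 * e21 P)"
    by (simp add: mat2_disc_def mat2_tr_def mat2_det_def power2_eq_square algebra_simps)
  define E where "E = mat2_scalar 2 * (mat2_deriv X0 + (X1 * P - P * X1) + (X0 * M1 - M1 * X0)
                 - (if b then (X0 * P - P * X0) * X0 else 0))"
  have E: "regular_mat2 E" using cond by (simp add: E_def)
  define R1 where "R1 = 2 * mat2_tr (mat2_deriv Z) - (if b then mat2_tr ((Z * N - N * Z) * Z) else 0)"
  have "fls_regular (4 * fls_deriv \<alpha> + R1)"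
    using regular_mat2_tr[OF E] unfolding E_def R1_def mat2_tr_commutator_condition_eq[OF N X0] .
  moreover have "fls_regular R1" using Z N_reg by (simp add: R1_def regular_mat2_tr)
  ultimately have "fls_regular (4 * fls_deriv \<alpha>)" by (rule fls_regular_add_cancel)
  thus "fls_regular \<alpha>" by (simp add: fls_regular_numeral_mult_iff fls_regular_deriv_iff)
  define R2 where "R2 = 2 * mat2_tr (mat2_deriv Z * N) + 2 * mat2_tr (Z * (M1 * N - N * M1))
    - (if b then mat2_tr ((Z * N - N * Z) * Z * N) else 0)"
  have "fls_regular (2 * (2 * fls_deriv \<beta> * mat2_disc P + \<beta> * fls_deriv (mat2_disc P)) + R2)"
    using regular_mat2_tr[OF regular_mat2_ring(4)[OF E N_reg]]
    unfolding E_def R2_def mat2_tr_commutator_condition_mult_eq[OF N X0 disc] .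
  moreover have "fls_regular R2" using Z N_reg M1 by (simp add: R2_def regular_mat2_tr)
  ultimately have "fls_regular (2 * (2 * fls_deriv \<beta> * mat2_disc P + \<beta> * fls_deriv (mat2_disc P)))"
    by (rule fls_regular_add_cancel)
  hence "fls_regular (2 * fls_deriv \<beta> * mat2_disc P + \<beta> * fls_deriv (mat2_disc P))"
    by (simp only: fls_regular_numeral_mult_iff)
  moreover have "fls_regular (mat2_disc P)"
    using P by (simp add: mat2_disc_def regular_mat2_tr regular_mat2_det)
  ultimately show "fls_regular \<beta>"
    using fls_regular_of_simple_zero d by blast
qed

lemma regular_mat2_of_commutator_conditions:
  fixes P M1 X0 X1 :: "'a::field_char_0 fls mat2"
  assumes P: "regular_mat2 P" and M1: "regular_mat2 M1"
    and d: "mat2_disc P $$ 0 = 0" "mat2_disc P $$ 1 \<noteq> 0"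
    and comm: "regular_mat2 (X0 * P - P * X0)"
    and cond: "regular_mat2 (mat2_deriv X0 + (X1 * P - P * X1) + (X0 * M1 - M1 * X0)
                 - (if b then (X0 * P - P * X0) * X0 else 0))"
  shows "regular_mat2 X0"
proof -
  define u v w where "u = e11 P - e22 P" and "v = 2 * e12 P" and "w = 2 * e21 P"
  define N where "N = Mat2 u v w (- u)"
  have N': "N = Mat2 (e11 P - e22 P) (2 * e12 P) (2 * e21 P) (e22 P - e11 P)"
    by (simp add: N_def u_def v_def w_def)
  have N: "regular_mat2 N" using P by (simp add: N' pred_mat2_sel fls_regular_numeral_mult_iff)
  have "X0 * N - N * X0 = mat2_scalar 2 * (X0 * P - P * X0)"
    unfolding N' by (rule mat2_eqI) (simp_all add: algebra_simps)
  hence "regular_mat2 (X0 * N - N * X0)" using comm by simp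
  moreover have "v $$ 0 \<noteq> 0 \<or> w $$ 0 \<noteq> 0"
    using offdiag_nonzero_of_simple_zero_disc[OF P d] by (simp add: v_def w_def)
  ultimately obtain \<alpha> \<beta> Z where X0: "X0 = mat2_scalar \<alpha> + mat2_scalar \<beta> * N + Z"
      and Z: "regular_mat2 Z"
    using regular_commutant_decomposition[OF N_def N] by blast
  have "fls_regular \<alpha>" "fls_regular \<beta>"
    by (rule commutant_coefficients_regular[OF N' X0 P M1 Z d cond])+
  thus ?thesis using N Z by (simp add: X0)
qed

lemma zlser_iff: "r \<in> zlser \<longleftrightarrow> (\<forall>n. fls_regular (r $ n))"
  by (simp add: zlser_def fls_regular_def)

lemma dz_nth [simp]: "dz f $ n = fls_deriv (f $ n)"
  by (simp add: dz_def)

lemma dz_ring [simp]: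
  "dz (f + g) = dz f + dz g" "dz (f - g) = dz f - dz g" "dz (- f) = - dz f"
  "dz (f * g) = dz f * g + f * dz g" "dz 0 = 0" "dz 1 = 0" "dz (fps_X ^ k) = 0"
  by (auto intro!: fps_ext simp: fps_one_nth fps_mult_nth fls_deriv_sum sum.distrib
      fps_X_power_nth)

lemma zlser_ring [simp]:
  "0 \<in> zlser" "1 \<in> zlser" "fps_X \<in> zlser"
  "f \<in> zlser \<Longrightarrow> g \<in> zlser \<Longrightarrow> f + g \<in> zlser"
  "f \<in> zlser \<Longrightarrow> g \<in> zlser \<Longrightarrow> f - g \<in> zlser"
  "f \<in> zlser \<Longrightarrow> - f \<in> zlser"
  "f \<in> zlser \<Longrightarrow> g \<in> zlser \<Longrightarrow> f * g \<in> zlser"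
  "f \<in> zlser \<Longrightarrow> dz f \<in> zlser"
  unfolding zlser_iff
  by (auto simp: fps_mult_nth fps_one_nth fps_X_nth fls_regular_deriv_iff intro!: fls_regular_sum)

lemma zlser_fps_X_power_mult_iff: "fps_X ^ k * f \<in> zlser \<longleftrightarrow> f \<in> zlser"
  unfolding zlser_iff
proof (intro iffI allI)
  fix n assume "\<forall>n. fls_regular ((fps_X ^ k * f) $ n)"
  hence "fls_regular ((fps_X ^ k * f) $ (n + k))" by blast
  thus "fls_regular (f $ n)" by (simp add: fps_X_power_mult_nth)
qed (simp add: fps_X_power_mult_nth)

lemma zlser_right_inverse:
  assumes r: "r \<in> zlser" and c: "fls_regular c" and rc: "r $ 0 * c = 1"
  shows "fps_right_inverse r c \<in> zlser" "r * fps_right_inverse r c = 1"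
proof -
  show "r * fps_right_inverse r c = 1" using fps_right_inverse[OF rc] .
  have "fls_regular (fps_right_inverse_constructor r c k)" for k
  proof (induction k rule: less_induct)
    case (less k)
    show ?case
    proof (cases k)
      case (Suc m)
      have "fps_right_inverse_constructor r c k
          = - c * (\<Sum>i=1..k. r $ i * fps_right_inverse_constructor r c (k - i))"
        unfolding Suc by (rule fps_right_inverse_constructor.simps(2))
      moreover have "fls_regular (\<Sum>i=1..k. r $ i * fps_right_inverse_constructor r c (k - i))"
        using less r Suc by (intro fls_regular_sum) (simp add: zlser_iff)
      ultimately show ?thesis using c by simp
    qed (use c in simp)
  qed
  thus "fps_right_inverse r c \<in> zlser" by (simp add: zlser_iff)
qed

abbreviation zlser_mat2 :: "lser mat2 \<Rightarrow> bool" where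
  "zlser_mat2 \<equiv> pred_mat2 (\<lambda>r. r \<in> zlser)"

abbreviation mat2_dz :: "lser mat2 \<Rightarrow> lser mat2" where
  "mat2_dz \<equiv> map_mat2 dz"

abbreviation mat2_coeff :: "nat \<Rightarrow> 'a fps mat2 \<Rightarrow> 'a mat2" where
  "mat2_coeff n \<equiv> map_mat2 (\<lambda>r. r $ n)"

lemma zlser_mat2_iff_coeff: "zlser_mat2 A \<longleftrightarrow> (\<forall>n. regular_mat2 (mat2_coeff n A))"
  by (auto simp: pred_mat2_sel zlser_iff)

lemma zlser_mat2_ring [simp]:
  "zlser_mat2 A \<Longrightarrow> zlser_mat2 B \<Longrightarrow> zlser_mat2 (A + B)"
  "zlser_mat2 A \<Longrightarrow> zlser_mat2 B \<Longrightarrow> zlser_mat2 (A - B)"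
  "zlser_mat2 A \<Longrightarrow> zlser_mat2 B \<Longrightarrow> zlser_mat2 (A * B)"
  "zlser_mat2 A \<Longrightarrow> zlser_mat2 (mat2_dz A)"
  "zlser_mat2 A \<Longrightarrow> zlser_mat2 (mat2_adj A)"
  "c \<in> zlser \<Longrightarrow> zlser_mat2 (mat2_scalar c)"
  "zlser_mat2 0" "zlser_mat2 1"
  by (auto simp: pred_mat2_sel mat2_adj_def)

lemma zlser_mat2_det: "zlser_mat2 A \<Longrightarrow> mat2_det A \<in> zlser"
  by (simp add: pred_mat2_sel mat2_det_def)

lemma zlser_mat2_coeff: "zlser_mat2 A \<Longrightarrow> regular_mat2 (mat2_coeff n A)"
  by (simp add: zlser_mat2_iff_coeff)

lemma zlser_mat2_scalar_X_power_mult_iff: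
  "zlser_mat2 (mat2_scalar (fps_X ^ k) * A) \<longleftrightarrow> zlser_mat2 A"
  by (simp add: pred_mat2_sel zlser_fps_X_power_mult_iff)

lemma mat2_dz_ring [simp]:
  "mat2_dz (A + B) = mat2_dz A + mat2_dz B" "mat2_dz (A - B) = mat2_dz A - mat2_dz B"
  "mat2_dz (A * B) = mat2_dz A * B + A * mat2_dz B" "mat2_dz 1 = 0"
  "mat2_dz (mat2_scalar c) = mat2_scalar (dz c)"
  by (auto intro: mat2_eqI simp: algebra_simps)

lemma mat2_coeff_ring [simp]:
  fixes A B :: "'a::comm_ring_1 fps mat2"
  shows "mat2_coeff n (A + B) = mat2_coeff n A + mat2_coeff n B"
    "mat2_coeff n (A - B) = mat2_coeff n A - mat2_coeff n B"
    "mat2_coeff 0 (A * B) = mat2_coeff 0 A * mat2_coeff 0 B"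
    "mat2_coeff (Suc 0) (A * B)
      = mat2_coeff 0 A * mat2_coeff (Suc 0) B + mat2_coeff (Suc 0) A * mat2_coeff 0 B"
    "mat2_coeff 0 (1 :: 'a fps mat2) = 1"
    "mat2_coeff n (mat2_scalar c) = mat2_scalar (c $ n)"
    "mat2_coeff k (mat2_scalar (fps_X ^ j) * A) = (if k < j then 0 else mat2_coeff (k - j) A)"
    "mat2_coeff 0 (mat2_scalar fps_X * A) = 0"
    "mat2_coeff (Suc k) (mat2_scalar fps_X * A) = mat2_coeff k A"
  by (auto intro: mat2_eqI simp: fps_X_power_mult_nth)

lemma mat2_coeff_dz [simp]: "mat2_coeff n (mat2_dz A) = mat2_deriv (mat2_coeff n A)"
  by (rule mat2_eqI) simp_all

lemma mat2_det_nth_0: "mat2_det A $ 0 = mat2_det (mat2_coeff 0 A)"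
  by (simp add: mat2_det_def)

lemma zlser_mat2_inverse:
  assumes Q: "zlser_mat2 Q" and B: "regular_mat2 B" "B * mat2_coeff 0 Q = 1"
  obtains Qi where "zlser_mat2 Qi" "Q * Qi = 1"
proof -
  have "mat2_det Q $ 0 * mat2_det B = 1"
    using mat2_det_inverse[OF B(2)] by (simp add: mat2_det_nth_0 mult.commute)
  from zlser_right_inverse[OF zlser_mat2_det[OF Q] regular_mat2_det[OF B(1)] this]
  obtain iq where iq: "iq \<in> zlser" "mat2_det Q * iq = 1" by blast
  show ?thesis
  proof (rule that)
    show "zlser_mat2 (mat2_adj Q * mat2_scalar iq)" using Q iq(1) by simp
    show "Q * (mat2_adj Q * mat2_scalar iq) = 1" by (rule mat2_inverse_of_det(1)[OF iq(2)])
  qed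
qed

abbreviation mat2_cutoff :: "nat \<Rightarrow> 'a::zero fps mat2 \<Rightarrow> 'a fps mat2" where
  "mat2_cutoff n \<equiv> map_mat2 (fps_cutoff n)"

abbreviation mat2_shift :: "nat \<Rightarrow> 'a::zero fps mat2 \<Rightarrow> 'a fps mat2" where
  "mat2_shift n \<equiv> map_mat2 (fps_shift n)"

lemma mat2_cutoff_shift:
  "A = mat2_cutoff n A + mat2_scalar (fps_X ^ n) * mat2_shift n (A :: 'a::comm_ring_1 fps mat2)"
  by (rule mat2_eqI) (simp_all add: fps_eq_iff fps_X_power_mult_nth)

lemma zlser_mat2_cutoff:
  "(\<And>k. k < n \<Longrightarrow> regular_mat2 (mat2_coeff k A)) \<Longrightarrow> zlser_mat2 (mat2_cutoff n A)"
  by (auto simp: pred_mat2_sel zlser_iff)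

section \<open>Gauge transformations\<close>

text \<open>Bases are the rows of a matrix: a \<open>\<lambda>\<close>-connection with matrix \<open>A\<close> sends the rows of \<open>W\<close>
  to the rows of \<open>\<lambda> W' + W A\<close>, and \<open>gauge W A M\<close> says that its matrix in the basis \<open>W\<close> is \<open>M\<close>.\<close>

definition gauge :: "lser mat2 \<Rightarrow> lser mat2 \<Rightarrow> lser mat2 \<Rightarrow> bool" where
  "gauge U M G \<longleftrightarrow> mat2_scalar fps_X * mat2_dz U + U * M = G * U"

lemma gauge_right_cancel:
  assumes W: "gauge W A M" and UW: "gauge (U * W) A G" and inv: "W * Wi = 1"
  shows "gauge U M G"
proof -
  have "(mat2_scalar fps_X * mat2_dz U + U * M) * W
      = mat2_scalar fps_X * (mat2_dz U * W) + U * (mat2_scalar fps_X * mat2_dz W + W * A)"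
    using W by (simp add: gauge_def algebra_simps)
  also have "\<dots> = mat2_scalar fps_X * mat2_dz (U * W) + U * W * A"
    by (simp add: algebra_simps mat2_scalar_commute[of _ U] flip: mult.assoc)
  also have "\<dots> = G * U * W"
    using UW by (simp add: gauge_def mult.assoc)
  finally show ?thesis
    unfolding gauge_def by (rule mat2_mult_right_cancel[OF _ inv])
qed

lemma gauge_conj:
  assumes "Q * Qi = 1"
  shows "gauge Q M ((mat2_scalar fps_X * mat2_dz Q + Q * M) * Qi)"
  using mat2_inverse_commute[OF assms] by (simp add: gauge_def mult.assoc)

lemma gauge_coeff_0:
  "gauge U M G \<Longrightarrow> mat2_coeff 0 U * mat2_coeff 0 M = mat2_coeff 0 G * mat2_coeff 0 U"
  unfolding gauge_def by (drule arg_cong[of _ _ "mat2_coeff 0"]) simp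

lemma gauge_disc_coeff_0:
  assumes "gauge W A M" "mat2_coeff 0 W * W0i = 1"
  shows "mat2_disc (mat2_coeff 0 M) = mat2_disc (mat2_coeff 0 A)"
proof -
  have "mat2_coeff 0 M = mat2_coeff 0 W * mat2_coeff 0 A * W0i"
    using gauge_coeff_0[OF assms(1)] assms(2) by (metis mult.assoc mult_1_right)
  thus ?thesis using mat2_disc_conj[OF assms(2)] by simp
qed

text \<open>Here \<open>G - M = \<lambda>\<^sup>n Y\<close> with \<open>Y = \<lambda> X' + X M - G X\<close> over \<open>\<complex>[[z,\<lambda>]]\<close>, and the coefficients of
  \<open>\<lambda>\<^sup>0\<close> and \<open>\<lambda>\<^sup>1\<close> in \<open>Y = \<lambda> X' + (X M - M X) - \<lambda>\<^sup>n Y X\<close> are the two hypotheses of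
  \<open>regular_mat2_of_commutator_conditions\<close>.\<close>

lemma gauge_near_identity_coeff_0_regular:
  fixes M G X :: "lser mat2"
  assumes n: "1 \<le> n" and M: "zlser_mat2 M" and G: "zlser_mat2 G"
    and gauge: "gauge (1 + mat2_scalar (fps_X ^ n) * X) M G"
    and d: "mat2_disc (mat2_coeff 0 M) $$ 0 = 0" "mat2_disc (mat2_coeff 0 M) $$ 1 \<noteq> 0"
  shows "regular_mat2 (mat2_coeff 0 X)"
proof -
  define L where "L = mat2_scalar (fps_X ^ n :: lser)"
  define l where "l = mat2_scalar (fps_X :: lser)"
  have lL: "l * (L * A) = L * (l * A)" and GL: "G * (L * A) = L * (G * A)" for A
    unfolding L_def l_def
    by (simp_all add: mult.assoc[symmetric] mat2_scalar_mult mult.commute mat2_scalar_commute[of _ G])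
  define Y where "Y = l * mat2_dz X + X * M - G * X"
  have GM: "G - M = L * Y"
  proof -
    have "l * (L * mat2_dz X) + (1 + L * X) * M = G * (1 + L * X)"
      using gauge by (simp add: gauge_def L_def l_def)
    hence "G - M = l * (L * mat2_dz X) + L * X * M - G * (L * X)"
      by (simp add: algebra_simps)
    also have "\<dots> = L * Y"
      unfolding Y_def by (simp add: algebra_simps lL GL)
    finally show ?thesis .
  qed
  have "zlser_mat2 (L * Y)" unfolding GM[symmetric] using G M by simp
  hence Y: "zlser_mat2 Y" unfolding L_def by (simp only: zlser_mat2_scalar_X_power_mult_iff)
  have "G = M + L * Y" by (simp add: GM[symmetric])
  hence Y_rec: "Y = l * mat2_dz X + (X * M - M * X) - L * (Y * X)"
    by (subst Y_def) (simp add: algebra_simps)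
  let ?X0 = "mat2_coeff 0 X" and ?M0 = "mat2_coeff 0 M"
  have Y0: "mat2_coeff 0 Y = ?X0 * ?M0 - ?M0 * ?X0"
    using n by (subst Y_rec) (simp add: l_def L_def)
  have Y1: "mat2_coeff 1 Y = mat2_deriv ?X0
      + (mat2_coeff 1 X * ?M0 - ?M0 * mat2_coeff 1 X) + (?X0 * mat2_coeff 1 M - mat2_coeff 1 M * ?X0)
      - (if n = 1 then (?X0 * ?M0 - ?M0 * ?X0) * ?X0 else 0)"
    using n by (subst Y_rec) (simp add: l_def L_def Y0 algebra_simps)
  show ?thesis
    using zlser_mat2_coeff[OF Y, of 0] zlser_mat2_coeff[OF Y, of 1] unfolding Y0 Y1
    by (rule regular_mat2_of_commutator_conditions[OF zlser_mat2_coeff[OF M] zlser_mat2_coeff[OF M] d])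
qed

lemma gauge_coeff_regular_step:
  fixes U M G :: "lser mat2"
  assumes n: "1 \<le> n" and M: "zlser_mat2 M" and G: "zlser_mat2 G" and gauge: "gauge U M G"
    and B: "regular_mat2 B" "B * mat2_coeff 0 U = 1"
    and d: "mat2_disc (mat2_coeff 0 M) $$ 0 = 0" "mat2_disc (mat2_coeff 0 M) $$ 1 \<noteq> 0"
    and below: "\<And>k. k < n \<Longrightarrow> regular_mat2 (mat2_coeff k U)"
  shows "regular_mat2 (mat2_coeff n U)"
proof -
  define Q where "Q = mat2_cutoff n U"
  define S where "S = mat2_shift n U"
  have US: "U = Q + mat2_scalar (fps_X ^ n) * S"
    unfolding Q_def S_def by (rule mat2_cutoff_shift)
  have Q: "zlser_mat2 Q" unfolding Q_def by (rule zlser_mat2_cutoff) (rule below)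
  have Q0: "mat2_coeff 0 Q = mat2_coeff 0 U" unfolding Q_def using n by (simp add: mat2.map_comp o_def)
  have "B * mat2_coeff 0 Q = 1" using B(2) Q0 by simp
  then obtain Qi where Qi: "zlser_mat2 Qi" and QQi: "Q * Qi = 1"
    using zlser_mat2_inverse[OF Q B(1)] by blast
  define Mt where "Mt = (mat2_scalar fps_X * mat2_dz Q + Q * M) * Qi"
  have gauge_Q: "gauge Q M Mt" unfolding Mt_def by (rule gauge_conj[OF QQi])
  have Mt: "zlser_mat2 Mt" unfolding Mt_def using Q Qi M by simp
  have "U * Qi * Q = U" by (simp add: mult.assoc mat2_inverse_commute[OF QQi])
  hence "gauge (U * Qi) Mt G"
    using gauge_right_cancel[OF gauge_Q _ QQi] gauge by simp
  moreover have "U * Qi = 1 + mat2_scalar (fps_X ^ n) * (S * Qi)"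
    unfolding US by (simp add: algebra_simps QQi)
  ultimately have gauge_V: "gauge (1 + mat2_scalar (fps_X ^ n) * (S * Qi)) Mt G" by simp
  have "mat2_disc (mat2_coeff 0 Mt) = mat2_disc (mat2_coeff 0 M)"
    using gauge_disc_coeff_0[OF gauge_Q] arg_cong[OF QQi, of "mat2_coeff 0"] by simp
  hence "regular_mat2 (mat2_coeff 0 (S * Qi))"
    using gauge_near_identity_coeff_0_regular[OF n Mt G gauge_V] d by simp
  hence "regular_mat2 (mat2_coeff n U * mat2_coeff 0 Qi * mat2_coeff 0 Q)"
    using zlser_mat2_coeff[OF Q] by (simp add: S_def mat2.map_comp o_def)
  moreover have "mat2_coeff 0 Qi * mat2_coeff 0 Q = 1"
    using arg_cong[OF mat2_inverse_commute[OF QQi], of "mat2_coeff 0"] by simp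
  ultimately show ?thesis by (simp add: mult.assoc)
qed

lemma zlser_mat2_of_gauge:
  fixes U M G :: "lser mat2"
  assumes M: "zlser_mat2 M" and G: "zlser_mat2 G" and gauge: "gauge U M G"
    and U0: "regular_mat2 (mat2_coeff 0 U)"
    and B: "regular_mat2 B" "B * mat2_coeff 0 U = 1"
    and d: "mat2_disc (mat2_coeff 0 M) $$ 0 = 0" "mat2_disc (mat2_coeff 0 M) $$ 1 \<noteq> 0"
  shows "zlser_mat2 U"
proof -
  have "regular_mat2 (mat2_coeff n U)" for n
  proof (induction n rule: less_induct)
    case (less n)
    show ?case
    proof (cases "n = 0")
      case False
      thus ?thesis using gauge_coeff_regular_step[OF _ M G gauge B d less] by simp
    qed (use U0 in simp)
  qed
  thus ?thesis by (simp add: zlser_mat2_iff_coeff)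
qed

section \<open>Lattices invariant under a \<open>\<lambda>\<close>-connection\<close>

definition connection_matrix :: "(vecu \<Rightarrow> vecu) \<Rightarrow> lser mat2" where
  "connection_matrix N = mat2_of_rows (N (1, 0)) (N (0, 1))"

definition row_span :: "lser mat2 \<Rightarrow> vecu set" where
  "row_span W = {row_mult x W | x. fst x \<in> zlser \<and> snd x \<in> zlser}"

lemma row_mult_in_row_span: "fst x \<in> zlser \<Longrightarrow> snd x \<in> zlser \<Longrightarrow> row_mult x W \<in> row_span W"
  unfolding row_span_def by blast

lemma lambda_connection_apply:
  assumes "lambda_connection N"
  shows "N x = (fst x * e11 (connection_matrix N) + snd x * e21 (connection_matrix N) + fps_X * dz (fst x),
                fst x * e12 (connection_matrix N) + snd x * e22 (connection_matrix N) + fps_X * dz (snd x))"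
proof -
  have add: "\<And>u v. N (vadd u v) = vadd (N u) (N v)"
    and leibniz: "\<And>f v. N (smul f v) = vadd (smul f (N v)) (smul (fps_X * dz f) v)"
    using assms unfolding lambda_connection_def by blast+
  have "x = vadd (smul (fst x) (1, 0)) (smul (snd x) (0, 1))"
    by (simp add: vadd_def smul_def)
  hence "N x = vadd (N (smul (fst x) (1, 0))) (N (smul (snd x) (0, 1)))"
    using add by metis
  thus ?thesis
    unfolding leibniz by (simp add: vadd_def smul_def connection_matrix_def algebra_simps)
qed

lemma lambda_connection_rows:
  assumes "lambda_connection N"
  shows "mat2_of_rows (N (row_mult (1, 0) Z)) (N (row_mult (0, 1) Z))
           = mat2_scalar fps_X * mat2_dz Z + Z * connection_matrix N"
  by (rule mat2_eqI) (simp_all add: lambda_connection_apply[OF assms] algebra_simps)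

lemma latticeU_row_span:
  assumes "latticeU L"
  obtains W where "mat2_det W $ 0 \<noteq> 0" "L = row_span W"
proof -
  obtain w1 w2 where w: "det2 w1 w2 $ 0 \<noteq> 0"
     "L = {vadd (smul a w1) (smul b w2) | a b. a \<in> zlser \<and> b \<in> zlser}"
    using assms unfolding latticeU_def by blast
  have "vadd (smul a w1) (smul b w2) = row_mult (a, b) (mat2_of_rows w1 w2)" for a b
    by (simp add: vadd_def smul_def row_mult_def)
  hence "L = row_span (mat2_of_rows w1 w2)"
    unfolding w(2) row_span_def by force
  moreover have "det2 w1 w2 = mat2_det (mat2_of_rows w1 w2)"
    by (simp add: det2_def mat2_det_def mult.commute)
  ultimately show ?thesis using w(1) that by simp
qed

lemma lser_mat2_right_inverse:
  assumes "mat2_det W $ 0 \<noteq> 0"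
  obtains Wi where "W * Wi = (1 :: lser mat2)"
proof -
  have "mat2_det W * inverse (mat2_det W) = 1"
    using inverse_mult_eq_1[OF assms] by (simp add: mult.commute)
  from mat2_inverse_of_det(1)[OF this] that show ?thesis by blast
qed

lemma row_span_mult_subset:
  assumes "zlser_mat2 U"
  shows "row_span (U * W) \<subseteq> row_span W"
proof
  fix v assume "v \<in> row_span (U * W)"
  then obtain x where x: "v = row_mult x (U * W)" "fst x \<in> zlser" "snd x \<in> zlser"
    unfolding row_span_def by auto
  have "v = row_mult (row_mult x U) W" unfolding x(1) row_mult_mult ..
  moreover have "fst (row_mult x U) \<in> zlser" "snd (row_mult x U) \<in> zlser"
    using x(2,3) assms by (simp_all add: row_mult_def pred_mat2_sel)
  ultimately show "v \<in> row_span W" unfolding row_span_def by blast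
qed

lemma red_row_mult: "red (row_mult x B) = row_mult (red x) (mat2_coeff 0 B)"
  by (simp add: red_def row_mult_def)

lemma regular_coeff_0_of_red_row_span_subset:
  assumes sub: "red ` row_span (U * W) \<subseteq> red ` row_span W"
    and W0: "mat2_coeff 0 W * W0i = 1"
  shows "regular_mat2 (mat2_coeff 0 U)"
proof -
  have row: "fls_regular (fst (row_mult (red e) (mat2_coeff 0 U)))
           \<and> fls_regular (snd (row_mult (red e) (mat2_coeff 0 U)))"
    if e: "fst e \<in> zlser" "snd e \<in> zlser" for e
  proof -
    have "red (row_mult e (U * W)) \<in> red ` row_span W"
      using sub row_mult_in_row_span[OF e] by blast
    then obtain x where x: "fst x \<in> zlser" "snd x \<in> zlser"
        "red (row_mult e (U * W)) = red (row_mult x W)"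
      unfolding row_span_def by auto
    from x(3) have "row_mult (row_mult (red e) (mat2_coeff 0 U)) (mat2_coeff 0 W)
        = row_mult (red x) (mat2_coeff 0 W)"
      by (simp add: red_row_mult row_mult_mult)
    hence "row_mult (red e) (mat2_coeff 0 U) = red x" by (rule row_mult_cancel[OF _ W0])
    thus ?thesis using x(1,2) by (simp add: red_def zlser_iff)
  qed
  show ?thesis
    using row[of "(1, 0)"] row[of "(0, 1)"] by (simp add: red_def pred_mat2_sel)
qed

lemma invariant_row_span_gauge:
  assumes conn: "lambda_connection N" and inv: "\<forall>v\<in>row_span W. N v \<in> row_span W"
  obtains M where "zlser_mat2 M" "gauge W (connection_matrix N) M"
proof -
  have "row_mult (1, 0) W \<in> row_span W" "row_mult (0, 1) W \<in> row_span W"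
    by (rule row_mult_in_row_span; simp)+
  with inv obtain x y where
    x: "N (row_mult (1, 0) W) = row_mult x W" "fst x \<in> zlser" "snd x \<in> zlser" and
    y: "N (row_mult (0, 1) W) = row_mult y W" "fst y \<in> zlser" "snd y \<in> zlser"
    unfolding row_span_def by blast
  have "gauge W (connection_matrix N) (mat2_of_rows x y)"
    unfolding gauge_def lambda_connection_rows[OF conn, symmetric] x(1) y(1)
    by (rule mat2_of_rows_row_mult)
  moreover have "zlser_mat2 (mat2_of_rows x y)" using x y by (simp add: pred_mat2_sel)
  ultimately show ?thesis using that by blast
qed

lemma mat2_disc_connection_matrix:
  "mat2_disc (mat2_coeff 0 (connection_matrix N)) = tr0 N ^ 2 - 4 * det0 N"
  by (simp add: mat2_disc_def mat2_tr_def mat2_det_def tr0_def det0_def det2_def nabla0_def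
      lift0_def red_def connection_matrix_def mult.commute)

lemma invariant_lattice_subset:
  assumes conn: "lambda_connection N"
    and d: "mat2_disc (mat2_coeff 0 (connection_matrix N)) $$ 0 = 0"
      "mat2_disc (mat2_coeff 0 (connection_matrix N)) $$ 1 \<noteq> 0"
    and L1: "latticeU L1" "\<forall>v\<in>L1. N v \<in> L1"
    and L2: "latticeU L2" "\<forall>v\<in>L2. N v \<in> L2"
    and red: "red ` L1 = red ` L2"
  shows "L2 \<subseteq> L1"
proof -
  obtain W where W: "mat2_det W $ 0 \<noteq> 0" "L1 = row_span W"
    using latticeU_row_span[OF L1(1)] by blast
  obtain Z where Z: "mat2_det Z $ 0 \<noteq> 0" "L2 = row_span Z"
    using latticeU_row_span[OF L2(1)] by blast
  obtain Wi where WWi: "W * Wi = 1" using lser_mat2_right_inverse[OF W(1)] by blast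
  obtain Zi where ZZi: "Z * Zi = 1" using lser_mat2_right_inverse[OF Z(1)] by blast
  obtain M where M: "zlser_mat2 M" "gauge W (connection_matrix N) M"
    using invariant_row_span_gauge[OF conn] L1(2) unfolding W(2) by blast
  obtain G where G: "zlser_mat2 G" "gauge Z (connection_matrix N) G"
    using invariant_row_span_gauge[OF conn] L2(2) unfolding Z(2) by blast
  define U where "U = Z * Wi"
  define Ui where "Ui = W * Zi"
  have ZU: "Z = U * W" and WUi: "W = Ui * Z"
    by (simp_all add: U_def Ui_def mult.assoc mat2_inverse_commute[OF WWi] mat2_inverse_commute[OF ZZi])
  have W0: "mat2_coeff 0 W * mat2_coeff 0 Wi = 1" and Z0: "mat2_coeff 0 Z * mat2_coeff 0 Zi = 1"
    using arg_cong[OF WWi, of "mat2_coeff 0"] arg_cong[OF ZZi, of "mat2_coeff 0"] by simp_all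
  have "gauge U M G" using gauge_right_cancel[OF M(2) _ WWi] G(2) ZU by simp
  moreover have "regular_mat2 (mat2_coeff 0 U)"
    by (rule regular_coeff_0_of_red_row_span_subset[OF _ W0]) (use red W Z ZU in simp)
  moreover have "regular_mat2 (mat2_coeff 0 Ui)"
    by (rule regular_coeff_0_of_red_row_span_subset[OF _ Z0]) (use red W Z WUi in simp)
  moreover have "mat2_coeff 0 Ui * mat2_coeff 0 U = 1"
  proof -
    have "Ui * U = W * (Zi * Z) * Wi" by (simp add: U_def Ui_def mult.assoc)
    hence "Ui * U = 1" by (simp add: mat2_inverse_commute[OF ZZi] WWi)
    from arg_cong[OF this, of "mat2_coeff 0"] show ?thesis by simp
  qed
  moreover have "mat2_disc (mat2_coeff 0 M) = mat2_disc (mat2_coeff 0 (connection_matrix N))"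
    by (rule gauge_disc_coeff_0[OF M(2) W0])
  ultimately have "zlser_mat2 U"
    using zlser_mat2_of_gauge[OF M(1) G(1)] d by simp
  thus ?thesis unfolding W(2) Z(2) ZU by (rule row_span_mult_subset)
qed

theorem corollary4p5:
  fixes t d :: "complex fps"
    and N :: "vecu \<Rightarrow> vecu"
    and L0 :: "vec0 set"
    and L1 L2 :: "vecu set"
  assumes simple_zero: "fps_nth (t^2 - 4 * d) 0 = 0" "fps_nth (t^2 - 4 * d) 1 \<noteq> 0"
    and conn: "lambda_connection N"
    and tr: "tr0 N = fps_to_fls t"
    and det: "det0 N = fps_to_fls d"
    and L0_lat: "lattice0 L0"
    and L0_inv: "\<forall>w\<in>L0. nabla0 N w \<in> L0"
    and L1_lat: "latticeU L1" and L1_red: "red ` L1 = L0" and L1_inv: "\<forall>v\<in>L1. N v \<in> L1"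
    and L2_lat: "latticeU L2" and L2_red: "red ` L2 = L0" and L2_inv: "\<forall>v\<in>L2. N v \<in> L2"
  shows "L1 = L2"
proof -
  have disc: "mat2_disc (mat2_coeff 0 (connection_matrix N)) = fps_to_fls (t^2 - 4 * d)"
    unfolding mat2_disc_connection_matrix tr det by (simp add: fps_to_fls_power fls_times_fps_to_fls)
  have d: "mat2_disc (mat2_coeff 0 (connection_matrix N)) $$ 0 = 0"
    "mat2_disc (mat2_coeff 0 (connection_matrix N)) $$ 1 \<noteq> 0"
    using simple_zero by (simp_all add: disc)
  have red: "red ` L1 = red ` L2" using L1_red L2_red by simp
  show ?thesis
  proof
    show "L2 \<subseteq> L1"
      by (rule invariant_lattice_subset[OF conn d L1_lat L1_inv L2_lat L2_inv red])
    show "L1 \<subseteq> L2"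
      by (rule invariant_lattice_subset[OF conn d L2_lat L2_inv L1_lat L1_inv red[symmetric]])
  qed
qed

end
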